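(* Let $A$ be a deterministic adaptive algorithm that reconstructs any binary string $S$ by asking $\chi(S)$ substring queries to the oracle, for some computable function $\chi$. Then there exists a compressor $\mathcal C$ (with associated decompressor $\mathcal C^{-1}$) such that $|\mathcal C(S)|=\chi(S)$ for every such $S$.
   Context: A compressor is an injective computable function $\mathcal C:\{0,1\}^+\to\{0,1\}^+$ whose inverse $\mathcal C^{-1}$ (the decompressor, with $\mathcal C^{-1}(\mathcal C(S))=S$) is also computable; $|\mathcal C(S)|$ denotes the length in bits of $\mathcal C(S)$. A substring oracle knows a hidden string $S$ and answers queries of the form "Is $s$ a substring of $S$?" with yes/no. An adaptive algorithm may choose each query depending on the answers to previous queries; it reconstructs $S$ if after its queries it determines $S$ exactly. Strings are over the binary alphabet $\{0,1\}$. *)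

theory Defs
  imports Main "HOL-Library.Sublist"
begin

datatype recf = Zero | Succ | Proj nat | Comp recf "recf list" | Prim recf recf | Mini recf

text \<open>Big-step semantics: eval f xs y means the partial recursive function f
  applied to the argument vector xs halts with value y.\<close>
inductive eval :: "recf \<Rightarrow> nat list \<Rightarrow> nat \<Rightarrow> bool" where
  zero: "eval Zero xs 0"
| succ: "eval Succ (x # xs) (Suc x)"
| proj: "i < length xs \<Longrightarrow> eval (Proj i) xs (xs ! i)"
| comp: "length ys = length gs \<Longrightarrow> (\<forall>i < length gs. eval (gs ! i) xs (ys ! i))
          \<Longrightarrow> eval f ys z \<Longrightarrow> eval (Comp f gs) xs z"
| prim0: "eval f xs y \<Longrightarrow> eval (Prim f g) (0 # xs) y"
| primS: "eval (Prim f g) (n # xs) y \<Longrightarrow> eval g (n # y # xs) z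
          \<Longrightarrow> eval (Prim f g) (Suc n # xs) z"
| mini: "eval f (n # xs) 0 \<Longrightarrow> (\<forall>m < n. \<exists>y. eval f (m # xs) y \<and> 0 < y)
          \<Longrightarrow> eval (Mini f) xs n"

section \<open>Encoding binary strings as natural numbers (bijective base 2)\<close>

fun enc :: "bool list \<Rightarrow> nat" where
  "enc [] = 0"
| "enc (b # bs) = 2 * enc bs + (if b then 2 else 1)"

definition computable_on :: "bool list set \<Rightarrow> (bool list \<Rightarrow> bool list) \<Rightarrow> bool" where
  "computable_on D f \<longleftrightarrow> (\<exists>p. \<forall>s \<in> D. eval p [enc s] (enc (f s)))"

definition computable_nat_on :: "bool list set \<Rightarrow> (bool list \<Rightarrow> nat) \<Rightarrow> bool" where
  "computable_nat_on D f \<longleftrightarrow> (\<exists>p. \<forall>s \<in> D. eval p [enc s] (f s))"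

datatype action = Query "bool list" | Output "bool list"

fun enc_action :: "action \<Rightarrow> nat" where
  "enc_action (Query s) = 2 * enc s"
| "enc_action (Output s) = 2 * enc s + 1"

text \<open>A deterministic adaptive algorithm is a (partial) strategy: given the list of
  substring_answer answers received so far, it either asks the next query or outputs its answer.\<close>
type_synonym algorithm = "bool list \<Rightarrow> action option"

definition is_algorithm :: "algorithm \<Rightarrow> bool" where
  "is_algorithm A \<longleftrightarrow> (\<exists>p. \<forall>h y. eval p [enc h] y \<longleftrightarrow> (\<exists>a. A h = Some a \<and> y = enc_action a))"

definition substring_answer :: "bool list \<Rightarrow> bool list \<Rightarrow> bool" where
  "substring_answer S q \<longleftrightarrow> sublist q S"

definition reconstructs_with :: "algorithm \<Rightarrow> bool list \<Rightarrow> nat \<Rightarrow> bool" where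
  "reconstructs_with A S n \<longleftrightarrow>
     (\<exists>h. length h = n
        \<and> (\<forall>i < n. \<exists>q. A (take i h) = Some (Query q) \<and> h ! i = substring_answer S q)
        \<and> A h = Some (Output S))"

definition nonempty_strings :: "bool list set" where
  "nonempty_strings = {s. s \<noteq> []}"

definition compressor_pair :: "(bool list \<Rightarrow> bool list) \<Rightarrow> (bool list \<Rightarrow> bool list) \<Rightarrow> bool" where
  "compressor_pair C D \<longleftrightarrow>
     (\<forall>S \<in> nonempty_strings. C S \<in> nonempty_strings)
   \<and> inj_on C nonempty_strings
   \<and> computable_on nonempty_strings C
   \<and> (\<forall>S \<in> nonempty_strings. D (C S) = S)
   \<and> computable_on (C ` nonempty_strings) D"

end

theory Submission
  imports Defs
begin

(*
  Compress S to the transcript of its reconstruction: the chi(S) answers the oracle gives while A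
  reconstructs S. Running A on the transcript replays the interaction and ends with the output S,
  which gives the decompressor and hence injectivity. The transcript is computable from S because
  a substring query about S can be answered by a primitive recursive function of the codes of
  the query and of S, so A can be simulated for chi(S) rounds without an oracle. It is nonempty,
  since an algorithm that outputs without asking anything outputs the same string for every S.
*)

section \<open>Total recursive functions\<close>

definition total_recursive :: "nat \<Rightarrow> (nat list \<Rightarrow> nat) \<Rightarrow> bool" where
  "total_recursive n f \<longleftrightarrow> (\<exists>p. \<forall>xs. length xs = n \<longrightarrow> eval p xs (f xs))"

lemma eval_Comp:
  assumes "list_all2 (\<lambda>g y. eval g xs y) gs ys" and "eval f ys z"
  shows "eval (Comp f gs) xs z"
  using assms by (intro eval.comp) (auto simp: list_all2_conv_all_nth)

lemma eval_Proj: "i < length xs \<Longrightarrow> y = xs ! i \<Longrightarrow> eval (Proj i) xs y"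
  by (simp add: eval.proj)

lemma total_recursive_cong:
  "total_recursive n f \<Longrightarrow> (\<And>xs. length xs = n \<Longrightarrow> f xs = g xs) \<Longrightarrow> total_recursive n g"
  unfolding total_recursive_def by metis

lemma total_recursive_proj: "i < n \<Longrightarrow> total_recursive n (\<lambda>xs. xs ! i)"
  unfolding total_recursive_def by (auto intro: eval.proj)

lemma total_recursive_comp:
  assumes "total_recursive (length gs) f" and "\<forall>g\<in>set gs. total_recursive n g"
  shows "total_recursive n (\<lambda>xs. f (map (\<lambda>g. g xs) gs))"
proof -
  obtain p where p: "\<And>ys. length ys = length gs \<Longrightarrow> eval p ys (f ys)"
    using assms(1) unfolding total_recursive_def by blast
  define prog where "prog g = (SOME q. \<forall>xs. length xs = n \<longrightarrow> eval q xs (g xs))" for g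
  have prog: "eval (prog g) xs (g xs)" if "g \<in> set gs" "length xs = n" for g xs
    using someI_ex[of "\<lambda>q. \<forall>xs. length xs = n \<longrightarrow> eval q xs (g xs)"] assms(2) that
    unfolding prog_def total_recursive_def by blast
  have "eval (Comp p (map prog gs)) xs (f (map (\<lambda>g. g xs) gs))" if "length xs = n" for xs
    by (rule eval_Comp[where ys="map (\<lambda>g. g xs) gs"])
       (use p prog that in \<open>auto simp: list_all2_map1 list_all2_map2 list_all2_same\<close>)
  then show ?thesis unfolding total_recursive_def by blast
qed

lemma total_recursive_comp1:
  "total_recursive 1 f \<Longrightarrow> total_recursive n g \<Longrightarrow> total_recursive n (\<lambda>xs. f [g xs])"
  using total_recursive_comp[where f=f and gs="[g]"] by simp

lemma total_recursive_comp2: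
  "total_recursive 2 f \<Longrightarrow> total_recursive n g \<Longrightarrow> total_recursive n h \<Longrightarrow>
   total_recursive n (\<lambda>xs. f [g xs, h xs])"
  using total_recursive_comp[where f=f and gs="[g, h]"] by (simp add: numeral_2_eq_2)

lemma total_recursive_comp3:
  "total_recursive 3 f \<Longrightarrow> total_recursive n g \<Longrightarrow> total_recursive n h \<Longrightarrow> total_recursive n k \<Longrightarrow>
   total_recursive n (\<lambda>xs. f [g xs, h xs, k xs])"
  using total_recursive_comp[where f=f and gs="[g, h, k]"] by (simp add: numeral_3_eq_3)

lemma total_recursive_Suc:
  assumes "total_recursive n f"
  shows "total_recursive n (\<lambda>xs. Suc (f xs))"
proof -
  have "total_recursive 1 (\<lambda>xs. Suc (xs ! 0))"
    unfolding total_recursive_def by (rule exI[of _ Succ]) (auto simp: length_Suc_conv intro: eval.succ)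
  from total_recursive_comp1[OF this assms] show ?thesis by simp
qed

lemma total_recursive_const: "total_recursive n (\<lambda>_. c)"
proof (induction c)
  case 0
  show ?case unfolding total_recursive_def by (auto intro: eval.zero)
next
  case (Suc c)
  show ?case using total_recursive_Suc[OF Suc] .
qed

lemma total_recursive_prim:
  assumes "total_recursive n f" and "total_recursive (Suc (Suc n)) g"
  shows "total_recursive (Suc n) (\<lambda>xs. rec_nat (f (tl xs)) (\<lambda>k y. g (k # y # tl xs)) (hd xs))"
proof -
  obtain p where p: "\<And>xs. length xs = n \<Longrightarrow> eval p xs (f xs)"
    using assms(1) unfolding total_recursive_def by blast
  obtain q where q: "\<And>zs. length zs = Suc (Suc n) \<Longrightarrow> eval q zs (g zs)"
    using assms(2) unfolding total_recursive_def by blast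
  have prim: "eval (Prim p q) (k # xs) (rec_nat (f xs) (\<lambda>k y. g (k # y # xs)) k)"
    if "length xs = n" for k xs
    by (induction k) (use p q that in \<open>auto intro: eval.prim0 eval.primS\<close>)
  show ?thesis
    unfolding total_recursive_def
  proof (intro exI allI impI)
    fix xs :: "nat list"
    assume "length xs = Suc n"
    then obtain k ys where "xs = k # ys" and "length ys = n"
      by (cases xs) auto
    then show "eval (Prim p q) xs (rec_nat (f (tl xs)) (\<lambda>k y. g (k # y # tl xs)) (hd xs))"
      using prim by simp
  qed
qed

lemma total_recursive_rec_nat:
  assumes "total_recursive n b" and "total_recursive (Suc (Suc n)) g" and "total_recursive n c"
    and "\<And>xs. length xs = n \<Longrightarrow> f xs = rec_nat (b xs) (\<lambda>k y. g (k # y # xs)) (c xs)"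
  shows "total_recursive n f"
proof -
  let ?gs = "c # map (\<lambda>i xs. xs ! i) [0..<n]"
  have comp: "total_recursive n
      (\<lambda>xs. (\<lambda>xs. rec_nat (b (tl xs)) (\<lambda>k y. g (k # y # tl xs)) (hd xs)) (map (\<lambda>g. g xs) ?gs))"
    by (rule total_recursive_comp)
       (use total_recursive_prim[OF assms(1,2)] assms(3) total_recursive_proj in auto)
  have nths: "map ((\<lambda>g. g xs) \<circ> (\<lambda>i xs. xs ! i)) [0..<n] = xs" if "length xs = n" for xs :: "nat list"
    using that by (auto simp: o_def intro: nth_equalityI)
  show ?thesis
    by (rule total_recursive_cong[OF comp]) (simp add: assms(4) nths)
qed

lemma total_recursive_add:
  assumes "total_recursive n f" and "total_recursive n g"
  shows "total_recursive n (\<lambda>xs. f xs + g xs)"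
proof -
  have rec: "rec_nat a (\<lambda>k. Suc) m = a + m" for a m :: nat
    by (induction m) auto
  have "total_recursive 2 (\<lambda>xs. xs ! 0 + xs ! 1)"
    by (rule total_recursive_rec_nat[where b="\<lambda>xs. xs ! 0" and g="\<lambda>zs. Suc (zs ! 1)"
          and c="\<lambda>xs. xs ! 1"])
       (simp_all add: rec total_recursive_Suc total_recursive_proj)
  from total_recursive_comp2[OF this assms] show ?thesis by simp
qed

lemma total_recursive_pred:
  assumes "total_recursive n f"
  shows "total_recursive n (\<lambda>xs. f xs - 1)"
proof -
  have rec: "rec_nat 0 (\<lambda>k y. k) m = m - 1" for m :: nat
    by (cases m) auto
  have "total_recursive 1 (\<lambda>xs. xs ! 0 - 1)"
    by (rule total_recursive_rec_nat[where b="\<lambda>_. 0" and g="\<lambda>zs. zs ! 0" and c="\<lambda>xs. xs ! 0"])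
       (simp_all add: rec total_recursive_const total_recursive_proj)
  from total_recursive_comp1[OF this assms] show ?thesis by simp
qed

lemma total_recursive_diff:
  assumes "total_recursive n f" and "total_recursive n g"
  shows "total_recursive n (\<lambda>xs. f xs - g xs)"
proof -
  have rec: "rec_nat a (\<lambda>k y. y - Suc 0) m = a - m" for a m :: nat
    by (induction m) auto
  have pred: "total_recursive (Suc (Suc 2)) (\<lambda>zs. zs ! 1 - 1)"
    by (rule total_recursive_pred, rule total_recursive_proj) simp
  have "total_recursive 2 (\<lambda>xs. xs ! 0 - xs ! 1)"
    by (rule total_recursive_rec_nat[where b="\<lambda>xs. xs ! 0" and g="\<lambda>zs. zs ! 1 - 1"
          and c="\<lambda>xs. xs ! 1", OF total_recursive_proj pred total_recursive_proj]) (simp_all add: rec)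
  from total_recursive_comp2[OF this assms] show ?thesis by simp
qed

lemma total_recursive_if_zero:
  assumes "total_recursive n c" and "total_recursive n f" and "total_recursive n g"
  shows "total_recursive n (\<lambda>xs. if c xs = 0 then g xs else f xs)"
proof -
  have rec: "rec_nat b (\<lambda>k y. a) m = (if m = 0 then b else a)" for a b m :: nat
    by (cases m) auto
  have "total_recursive 3 (\<lambda>xs. if xs ! 0 = 0 then xs ! 2 else xs ! 1)"
    by (rule total_recursive_rec_nat[where b="\<lambda>xs. xs ! 2" and g="\<lambda>zs. zs ! 3"
          and c="\<lambda>xs. xs ! 0"]) (simp_all add: rec total_recursive_proj)
  from total_recursive_comp3[OF this assms] show ?thesis
    by (rule total_recursive_cong) (simp add: numeral_2_eq_2)
qed

definition decidable :: "nat \<Rightarrow> (nat list \<Rightarrow> bool) \<Rightarrow> bool" where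
  "decidable n P \<longleftrightarrow> total_recursive n (\<lambda>xs. of_bool (P xs))"

lemma decidable_cong:
  "decidable n P \<Longrightarrow> (\<And>xs. length xs = n \<Longrightarrow> P xs = Q xs) \<Longrightarrow> decidable n Q"
  unfolding decidable_def by (erule total_recursive_cong) simp

lemma total_recursive_If:
  assumes "decidable n P" and "total_recursive n f" and "total_recursive n g"
  shows "total_recursive n (\<lambda>xs. if P xs then f xs else g xs)"
  using total_recursive_if_zero[OF assms[unfolded decidable_def]] by (rule total_recursive_cong) simp

lemma decidable_eq_0:
  assumes "total_recursive n f"
  shows "decidable n (\<lambda>xs. f xs = 0)"
  using total_recursive_if_zero[OF assms total_recursive_const[of n 0] total_recursive_const[of n 1]]
  unfolding decidable_def by (rule total_recursive_cong) simp

lemma decidable_not: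
  assumes "decidable n P"
  shows "decidable n (\<lambda>xs. \<not> P xs)"
  using total_recursive_If[OF assms total_recursive_const[of n 0] total_recursive_const[of n 1]]
  unfolding decidable_def by (rule total_recursive_cong) simp

lemma decidable_conj:
  assumes "decidable n P" and "decidable n Q"
  shows "decidable n (\<lambda>xs. P xs \<and> Q xs)"
  using total_recursive_If[OF assms(1) assms(2)[unfolded decidable_def] total_recursive_const[of n 0]]
  unfolding decidable_def by (rule total_recursive_cong) simp

lemma decidable_imp:
  assumes "decidable n P" and "decidable n Q"
  shows "decidable n (\<lambda>xs. P xs \<longrightarrow> Q xs)"
  using decidable_not[OF decidable_conj[OF assms(1) decidable_not[OF assms(2)]]]
  by (rule decidable_cong) auto

lemma decidable_le:
  assumes "total_recursive n f" and "total_recursive n g"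
  shows "decidable n (\<lambda>xs. f xs \<le> g xs)"
  using decidable_eq_0[OF total_recursive_diff[OF assms]] by (rule decidable_cong) simp

lemma decidable_eq:
  assumes "total_recursive n f" and "total_recursive n g"
  shows "decidable n (\<lambda>xs. f xs = g xs)"
  using decidable_conj[OF decidable_le[OF assms] decidable_le[OF assms(2,1)]]
  by (rule decidable_cong) auto

lemma decidable_comp2:
  "decidable 2 P \<Longrightarrow> total_recursive n f \<Longrightarrow> total_recursive n g \<Longrightarrow>
   decidable n (\<lambda>xs. P [f xs, g xs])"
  unfolding decidable_def by (rule total_recursive_comp2)

lemma total_recursive_drop_second:
  assumes "total_recursive (Suc n) f"
  shows "total_recursive (Suc (Suc n)) (\<lambda>zs. f (hd zs # drop 2 zs))"
proof -
  let ?gs = "map (\<lambda>i zs. zs ! i) (0 # [2..<Suc (Suc n)])"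
  have "length ?gs = Suc n"
    by (simp del: upt_Suc)
  then have comp: "total_recursive (Suc (Suc n)) (\<lambda>zs. f (map (\<lambda>g. g zs) ?gs))"
    by (intro total_recursive_comp) (auto simp: assms total_recursive_proj simp del: upt_Suc)
  have args: "map (\<lambda>g. g zs) ?gs = hd zs # drop 2 zs" if "length zs = Suc (Suc n)" for zs :: "nat list"
  proof -
    have "map (\<lambda>i. zs ! i) [2..<length zs] = drop 2 zs"
      by (rule nth_equalityI) auto
    then show ?thesis
      using that by (cases zs) (simp_all add: o_def del: upt_Suc)
  qed
  show ?thesis
    by (rule total_recursive_cong[OF comp]) (simp only: args)
qed

lemma decidable_all_less:
  assumes "decidable (Suc n) P" and "total_recursive n c"
  shows "decidable n (\<lambda>xs. \<forall>i < c xs. P (i # xs))"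
proof -
  have rec: "rec_nat (Suc 0) (\<lambda>k y. of_bool (Q k \<and> 0 < y)) m = (of_bool (\<forall>i<m. Q i) :: nat)"
    for Q and m :: nat
    by (induction m) (auto simp: less_Suc_eq)
  have step: "decidable (Suc (Suc n)) (\<lambda>zs. P (hd zs # drop 2 zs) \<and> zs ! 1 \<noteq> 0)"
    using total_recursive_drop_second[OF assms(1)[unfolded decidable_def]]
    by (intro decidable_conj decidable_not decidable_eq_0 total_recursive_proj)
       (simp_all add: decidable_def)
  show ?thesis
    unfolding decidable_def
    by (rule total_recursive_rec_nat[where b="\<lambda>_. 1" and c=c,
          OF total_recursive_const step[unfolded decidable_def] assms(2)])
       (simp add: rec)
qed

lemma decidable_ex_less:
  assumes "decidable (Suc n) P" and "total_recursive n c"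
  shows "decidable n (\<lambda>xs. \<exists>i < c xs. P (i # xs))"
  using decidable_not[OF decidable_all_less[OF decidable_not[OF assms(1)] assms(2)]]
  by (rule decidable_cong) simp

lemma total_recursive_mod_2:
  assumes "total_recursive n f"
  shows "total_recursive n (\<lambda>xs. f xs mod 2)"
proof -
  have rec: "rec_nat 0 (\<lambda>k y. of_bool (y = 0)) m = m mod 2" for m :: nat
    by (induction m) (auto simp: mod_Suc)
  have parity: "decidable 3 (\<lambda>zs. zs ! 1 = 0)"
    by (rule decidable_eq_0, rule total_recursive_proj) simp
  have "total_recursive 1 (\<lambda>xs. xs ! 0 mod 2)"
    by (rule total_recursive_rec_nat[where b="\<lambda>_. 0" and c="\<lambda>xs. xs ! 0"
          and g="\<lambda>zs. of_bool (zs ! 1 = 0)"])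
       (use parity in \<open>simp_all add: rec decidable_def total_recursive_const total_recursive_proj
          numeral_3_eq_3\<close>)
  from total_recursive_comp1[OF this assms] show ?thesis by simp
qed

lemma total_recursive_div_2:
  assumes "total_recursive n f"
  shows "total_recursive n (\<lambda>xs. f xs div 2)"
proof -
  have rec: "rec_nat 0 (\<lambda>k y. y + k mod 2) m = m div 2" for m :: nat
    by (induction m) (auto, presburger)
  have step: "total_recursive 3 (\<lambda>zs. zs ! 1 + zs ! 0 mod 2)"
    by (intro total_recursive_add total_recursive_mod_2 total_recursive_proj) simp_all
  have "total_recursive 1 (\<lambda>xs. xs ! 0 div 2)"
    by (rule total_recursive_rec_nat[where b="\<lambda>_. 0" and c="\<lambda>xs. xs ! 0"
          and g="\<lambda>zs. zs ! 1 + zs ! 0 mod 2"])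
       (use step in \<open>simp_all add: rec total_recursive_const total_recursive_proj numeral_3_eq_3\<close>)
  from total_recursive_comp1[OF this assms] show ?thesis by simp
qed

lemma total_recursive_power_2:
  assumes "total_recursive n f"
  shows "total_recursive n (\<lambda>xs. 2 ^ f xs)"
proof -
  have rec: "rec_nat (Suc 0) (\<lambda>k y. y + y) m = 2 ^ m" for m :: nat
    by (induction m) auto
  have step: "total_recursive 3 (\<lambda>zs. zs ! 1 + zs ! 1)"
    by (intro total_recursive_add total_recursive_proj) simp_all
  have "total_recursive 1 (\<lambda>xs. 2 ^ (xs ! 0))"
    by (rule total_recursive_rec_nat[where b="\<lambda>_. 1" and c="\<lambda>xs. xs ! 0"
          and g="\<lambda>zs. zs ! 1 + zs ! 1"])
       (use step in \<open>simp_all add: rec total_recursive_const total_recursive_proj numeral_3_eq_3\<close>)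
  from total_recursive_comp1[OF this assms] show ?thesis by simp
qed

section \<open>Recursive operations on codes of binary strings\<close>

(* Since enc (b # bs) = 2 * enc bs + (if b then 2 else 1), the code of the tail is (y - 1) div 2
   and the head is True iff the code is even. *)
definition tl_code :: "nat \<Rightarrow> nat" where
  "tl_code y = (y - 1) div 2"

definition drop_code :: "nat \<Rightarrow> nat \<Rightarrow> nat" where
  "drop_code k = tl_code ^^ k"

(* Searching up to the code itself suffices, as the length of a string never exceeds its code. *)
definition length_code :: "nat \<Rightarrow> nat" where
  "length_code y = (\<Sum>i<y. of_bool (drop_code i y \<noteq> 0))"

definition prefix_code :: "nat \<Rightarrow> nat \<Rightarrow> bool" where
  "prefix_code u v \<longleftrightarrow>
     (\<forall>i<u. drop_code i u \<noteq> 0 \<longrightarrow> drop_code i v \<noteq> 0 \<and> drop_code i u mod 2 = drop_code i v mod 2)"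

definition sublist_code :: "nat \<Rightarrow> nat \<Rightarrow> bool" where
  "sublist_code u v \<longleftrightarrow> (\<exists>k < Suc v. prefix_code u (drop_code k v))"

(* Here a is the code 2 * enc q of the action Query q, and appending the bit b to the string
   coded by y adds (if b then 2 else 1) * 2 ^ length to its code. *)
definition snoc_answer_code :: "nat \<Rightarrow> nat \<Rightarrow> nat \<Rightarrow> nat" where
  "snoc_answer_code y a x =
     y + 2 ^ length_code y + (if sublist_code (a div 2) x then 2 ^ length_code y else 0)"

lemma prefix_iff_nth: "prefix xs ys \<longleftrightarrow> (\<forall>i < length xs. i < length ys \<and> xs ! i = ys ! i)"
proof
  assume "prefix xs ys"
  then obtain zs where "ys = xs @ zs"
    by (auto simp: prefix_def)
  then show "\<forall>i < length xs. i < length ys \<and> xs ! i = ys ! i"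
    by (auto simp: nth_append)
next
  assume nth: "\<forall>i < length xs. i < length ys \<and> xs ! i = ys ! i"
  then have "length xs \<le> length ys"
    using nth[rule_format, of "length ys"] by (meson less_irrefl not_le)
  with nth have "take (length xs) ys = xs"
    by (auto intro: nth_equalityI)
  then show "prefix xs ys"
    by (metis take_is_prefix)
qed

lemma sublist_iff_prefix_drop: "sublist xs ys \<longleftrightarrow> (\<exists>k \<le> length ys. prefix xs (drop k ys))"
proof
  assume "sublist xs ys"
  then obtain ps ss where "ys = ps @ xs @ ss"
    by (auto simp: sublist_def)
  then show "\<exists>k \<le> length ys. prefix xs (drop k ys)"
    by (intro exI[of _ "length ps"]) auto
next
  assume "\<exists>k \<le> length ys. prefix xs (drop k ys)"
  then obtain k ss where "drop k ys = xs @ ss"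
    by (auto simp: prefix_def)
  then have "ys = take k ys @ xs @ ss"
    by (metis append_take_drop_id)
  then show "sublist xs ys"
    unfolding sublist_def by blast
qed

lemma enc_eq_0_iff [simp]: "enc h = 0 \<longleftrightarrow> h = []"
  by (cases h) auto

lemma length_le_enc: "length h \<le> enc h"
  by (induction h) auto

lemma tl_code_enc: "tl_code (enc h) = enc (tl h)"
  by (cases h) (auto simp: tl_code_def)

lemma drop_code_enc: "drop_code k (enc h) = enc (drop k h)"
proof (induction k arbitrary: h)
  case 0
  then show ?case by (simp add: drop_code_def)
next
  case (Suc k)
  have "drop_code (Suc k) (enc h) = drop_code k (tl_code (enc h))"
    by (simp only: drop_code_def funpow_Suc_right o_apply)
  then show ?case
    by (simp add: Suc tl_code_enc drop_Suc)
qed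

lemma length_code_enc: "length_code (enc h) = length h"
proof -
  have "(\<Sum>i<enc h. of_bool (drop i h \<noteq> []) :: nat) = (\<Sum>i<length h. 1)"
    by (rule sum.mono_neutral_cong_right) (use length_le_enc[of h] in auto)
  then show ?thesis
    by (simp add: length_code_def drop_code_enc)
qed

lemma enc_drop_mod_2: "i < length h \<Longrightarrow> enc (drop i h) mod 2 = (if h ! i then 0 else 1)"
  by (simp add: Cons_nth_drop_Suc[symmetric])

lemma prefix_code_enc: "prefix_code (enc xs) (enc ys) \<longleftrightarrow> prefix xs ys"
proof -
  have bit: "(drop_code i (enc xs) \<noteq> 0 \<longrightarrow>
        drop_code i (enc ys) \<noteq> 0 \<and> drop_code i (enc xs) mod 2 = drop_code i (enc ys) mod 2)
      \<longleftrightarrow> (i < length xs \<longrightarrow> i < length ys \<and> xs ! i = ys ! i)" for i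
    by (cases "i < length xs"; cases "i < length ys") (simp_all add: drop_code_enc enc_drop_mod_2)
  have "prefix_code (enc xs) (enc ys) \<longleftrightarrow>
      (\<forall>i < enc xs. i < length xs \<longrightarrow> i < length ys \<and> xs ! i = ys ! i)"
    unfolding prefix_code_def bit ..
  also have "\<dots> \<longleftrightarrow> prefix xs ys"
    unfolding prefix_iff_nth using length_le_enc[of xs] by (meson less_le_trans)
  finally show ?thesis .
qed

lemma sublist_code_enc: "sublist_code (enc xs) (enc ys) \<longleftrightarrow> sublist xs ys"
proof -
  have "sublist_code (enc xs) (enc ys) \<longleftrightarrow> (\<exists>k < Suc (enc ys). prefix xs (drop k ys))"
    by (simp add: sublist_code_def drop_code_enc prefix_code_enc)
  also have "\<dots> \<longleftrightarrow> (\<exists>k \<le> length ys. prefix xs (drop k ys))"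
  proof
    assume "\<exists>k < Suc (enc ys). prefix xs (drop k ys)"
    then obtain k where "prefix xs (drop k ys)"
      by blast
    then show "\<exists>k \<le> length ys. prefix xs (drop k ys)"
      by (cases "k \<le> length ys") (auto intro: exI[of _ "length ys"])
  next
    assume "\<exists>k \<le> length ys. prefix xs (drop k ys)"
    then show "\<exists>k < Suc (enc ys). prefix xs (drop k ys)"
      using length_le_enc[of ys] by (meson le_imp_less_Suc order_trans)
  qed
  finally show ?thesis
    by (simp add: sublist_iff_prefix_drop)
qed

lemma enc_snoc: "enc (h @ [b]) = enc h + 2 ^ length h + (if b then 2 ^ length h else 0)"
  by (induction h) auto

lemma snoc_answer_code_enc:
  "snoc_answer_code (enc h) (enc_action (Query q)) (enc S) = enc (h @ [substring_answer S q])"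
  by (simp add: snoc_answer_code_def enc_snoc length_code_enc sublist_code_enc substring_answer_def)

lemma total_recursive_tl_code:
  "total_recursive n f \<Longrightarrow> total_recursive n (\<lambda>xs. tl_code (f xs))"
  unfolding tl_code_def by (intro total_recursive_div_2 total_recursive_pred)

lemma total_recursive_drop_code:
  assumes "total_recursive n k" and "total_recursive n x"
  shows "total_recursive n (\<lambda>xs. drop_code (k xs) (x xs))"
proof -
  have rec: "rec_nat y (\<lambda>i. F) m = (F ^^ m) y" for F y and m :: nat
    by (induction m) auto
  have "total_recursive (Suc (Suc n)) (\<lambda>zs. tl_code (zs ! 1))"
    by (intro total_recursive_tl_code total_recursive_proj) simp
  then show ?thesis
    by (intro total_recursive_rec_nat[where b=x and c=k and g="\<lambda>zs. tl_code (zs ! 1)",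
          OF assms(2) _ assms(1)])
       (simp_all add: rec drop_code_def)
qed

lemma total_recursive_length_code:
  assumes "total_recursive n f"
  shows "total_recursive n (\<lambda>xs. length_code (f xs))"
proof -
  have "rec_nat 0 (\<lambda>i l. l + of_bool (0 < drop_code i y)) m = (\<Sum>i<m. of_bool (drop_code i y \<noteq> 0))"
    for y m :: nat
    by (induction m) auto
  then have rec: "rec_nat 0 (\<lambda>i l. l + of_bool (0 < drop_code i y)) y = length_code y" for y
    unfolding length_code_def .
  have step: "total_recursive 3 (\<lambda>zs. zs ! 1 + of_bool (drop_code (zs ! 0) (zs ! 2) \<noteq> 0))"
    using decidable_not[OF decidable_eq_0[OF total_recursive_drop_code]]
    by (intro total_recursive_add total_recursive_proj)
       (simp_all add: decidable_def total_recursive_proj)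
  have "total_recursive 1 (\<lambda>xs. length_code (xs ! 0))"
    by (rule total_recursive_rec_nat[where b="\<lambda>_. 0" and c="\<lambda>xs. xs ! 0"
          and g="\<lambda>zs. zs ! 1 + of_bool (drop_code (zs ! 0) (zs ! 2) \<noteq> 0)"])
       (use step in \<open>simp_all add: rec total_recursive_const total_recursive_proj numeral_3_eq_3\<close>)
  from total_recursive_comp1[OF this assms] show ?thesis by simp
qed

lemma decidable_prefix_code:
  assumes "total_recursive n f" and "total_recursive n g"
  shows "decidable n (\<lambda>xs. prefix_code (f xs) (g xs))"
proof -
  have "decidable (Suc 2) (\<lambda>zs. drop_code (zs ! 0) (zs ! 1) \<noteq> 0 \<longrightarrow>
      drop_code (zs ! 0) (zs ! 2) \<noteq> 0 \<and>
      drop_code (zs ! 0) (zs ! 1) mod 2 = drop_code (zs ! 0) (zs ! 2) mod 2)"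
    by (intro decidable_imp decidable_conj decidable_not decidable_eq_0 decidable_eq
          total_recursive_mod_2 total_recursive_drop_code total_recursive_proj) simp_all
  from decidable_all_less[OF this total_recursive_proj[of 0 2, simplified]]
  have "decidable 2 (\<lambda>xs. prefix_code (xs ! 0) (xs ! 1))"
    unfolding prefix_code_def by (rule decidable_cong) simp
  from decidable_comp2[OF this assms] show ?thesis
    by simp
qed

lemma decidable_sublist_code:
  assumes "total_recursive n f" and "total_recursive n g"
  shows "decidable n (\<lambda>xs. sublist_code (f xs) (g xs))"
proof -
  have "decidable (Suc 2) (\<lambda>zs. prefix_code (zs ! 1) (drop_code (zs ! 0) (zs ! 2)))"
    by (intro decidable_prefix_code total_recursive_drop_code total_recursive_proj) simp_all
  from decidable_ex_less[OF this total_recursive_Suc[OF total_recursive_proj[of 1 2, simplified]]]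
  have "decidable 2 (\<lambda>xs. sublist_code (xs ! 0) (xs ! 1))"
    unfolding sublist_code_def by (rule decidable_cong) simp
  from decidable_comp2[OF this assms] show ?thesis
    by simp
qed

lemma total_recursive_snoc_answer_code:
  "total_recursive 3 (\<lambda>xs. snoc_answer_code (xs ! 0) (xs ! 1) (xs ! 2))"
  unfolding snoc_answer_code_def
  by (intro total_recursive_add total_recursive_power_2 total_recursive_length_code total_recursive_If
        decidable_sublist_code total_recursive_div_2 total_recursive_proj total_recursive_const) simp_all

section \<open>Transcripts of adaptive algorithms\<close>

definition is_transcript :: "algorithm \<Rightarrow> bool list \<Rightarrow> bool list \<Rightarrow> bool" where
  "is_transcript A S h \<longleftrightarrow>
     (\<forall>i < length h. \<exists>q. A (take i h) = Some (Query q) \<and> h ! i = substring_answer S q)"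

lemma is_transcript_snoc:
  "is_transcript A S (h @ [b]) \<longleftrightarrow>
     is_transcript A S h \<and> (\<exists>q. A h = Some (Query q) \<and> b = substring_answer S q)"
  by (auto simp: is_transcript_def nth_append less_Suc_eq)

lemma reconstructs_with_iff:
  "reconstructs_with A S n \<longleftrightarrow> (\<exists>h. length h = n \<and> is_transcript A S h \<and> A h = Some (Output S))"
  by (auto simp: reconstructs_with_def is_transcript_def)

lemma reconstructs_with_0_unique:
  assumes "reconstructs_with A S 0" and "reconstructs_with A S' n"
  shows "S' = S"
proof -
  have "A [] = Some (Output S)"
    using assms(1) by (simp add: reconstructs_with_def)
  then show ?thesis
    using assms(2) unfolding reconstructs_with_def by (cases n) auto
qed

lemma reconstructs_with_nonzero:
  assumes "\<forall>S \<in> nonempty_strings. reconstructs_with A S (\<chi> S)" and "S \<in> nonempty_strings"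
  shows "\<chi> S \<noteq> 0"
proof
  assume "\<chi> S = 0"
  with assms have "reconstructs_with A S 0"
    by metis
  then have "[True] = S" and "[False] = S"
    using reconstructs_with_0_unique assms(1) unfolding nonempty_strings_def by blast+
  then show False
    by auto
qed

lemma transcript_computable:
  assumes "is_algorithm A"
  obtains P where "\<And>S h. is_transcript A S h \<Longrightarrow> eval P [length h, enc S] (enc h)"
proof -
  obtain pA where pA: "\<And>h y. eval pA [enc h] y \<longleftrightarrow> (\<exists>a. A h = Some a \<and> y = enc_action a)"
    using assms unfolding is_algorithm_def by blast
  obtain pT where pT: "\<And>xs. length xs = 3 \<Longrightarrow> eval pT xs (snoc_answer_code (xs ! 0) (xs ! 1) (xs ! 2))"
    using total_recursive_snoc_answer_code unfolding total_recursive_def by blast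
  let ?step = "Comp pT [Proj 1, Comp pA [Proj 1], Proj 2]"
  have "eval (Prim Zero ?step) [length h, enc S] (enc h)" if "is_transcript A S h" for S h
    using that
  proof (induction h rule: rev_induct)
    case Nil
    show ?case by (auto intro: eval.prim0 eval.zero)
  next
    case (snoc b h)
    then obtain q where q: "A h = Some (Query q)" and b: "b = substring_answer S q"
      and IH: "eval (Prim Zero ?step) [length h, enc S] (enc h)"
      by (auto simp: is_transcript_snoc)
    have "eval (Comp pA [Proj 1]) [length h, enc h, enc S] (enc_action (Query q))"
      by (rule eval_Comp[where ys="[enc h]"]) (auto simp: pA q intro: eval_Proj)
    then have "eval ?step [length h, enc h, enc S]
        (snoc_answer_code (enc h) (enc_action (Query q)) (enc S))"
      by (intro eval_Comp[where ys="[enc h, enc_action (Query q), enc S]"])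
         (use pT[of "[enc h, enc_action (Query q), enc S]"] in \<open>auto intro: eval_Proj\<close>)
    with IH show ?case
      unfolding snoc_answer_code_enc b[symmetric] by (auto intro: eval.primS)
  qed
  then show thesis
    by (rule that)
qed

definition transcript_for :: "algorithm \<Rightarrow> bool list \<Rightarrow> nat \<Rightarrow> bool list" where
  "transcript_for A S n = (SOME h. length h = n \<and> is_transcript A S h \<and> A h = Some (Output S))"

lemma transcript_for_spec:
  assumes "reconstructs_with A S n"
  shows "length (transcript_for A S n) = n" and "is_transcript A S (transcript_for A S n)"
    and "A (transcript_for A S n) = Some (Output S)"
  using someI_ex[OF assms[unfolded reconstructs_with_iff]] unfolding transcript_for_def by blast+

definition output_of :: "algorithm \<Rightarrow> bool list \<Rightarrow> bool list" where
  "output_of A h = (case A h of Some (Output s) \<Rightarrow> s | _ \<Rightarrow> [])"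

lemma computable_on_subset: "computable_on D f \<Longrightarrow> E \<subseteq> D \<Longrightarrow> computable_on E f"
  unfolding computable_on_def by blast

lemma computable_on_transcript_for:
  assumes "is_algorithm A" and "computable_nat_on D \<chi>" and "\<forall>S \<in> D. reconstructs_with A S (\<chi> S)"
  shows "computable_on D (\<lambda>S. transcript_for A S (\<chi> S))"
proof -
  obtain P where P: "\<And>S h. is_transcript A S h \<Longrightarrow> eval P [length h, enc S] (enc h)"
    using transcript_computable[OF assms(1)] by blast
  obtain pX where pX: "\<And>S. S \<in> D \<Longrightarrow> eval pX [enc S] (\<chi> S)"
    using assms(2) unfolding computable_nat_on_def by blast
  have "eval (Comp P [pX, Proj 0]) [enc S] (enc (transcript_for A S (\<chi> S)))" if "S \<in> D" for S
    using P[of S "transcript_for A S (\<chi> S)"] transcript_for_spec[of A S "\<chi> S"] assms(3) pX that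
    by (intro eval_Comp[where ys="[\<chi> S, enc S]"]) (auto intro: eval_Proj)
  then show ?thesis
    unfolding computable_on_def by blast
qed

lemma computable_on_output_of:
  assumes "is_algorithm A"
  shows "computable_on {h. \<exists>s. A h = Some (Output s)} (output_of A)"
proof -
  obtain pA where pA: "\<And>h y. eval pA [enc h] y \<longleftrightarrow> (\<exists>a. A h = Some a \<and> y = enc_action a)"
    using assms unfolding is_algorithm_def by blast
  obtain pH where pH: "\<And>xs. length xs = 1 \<Longrightarrow> eval pH xs (xs ! 0 div 2)"
    using total_recursive_div_2[OF total_recursive_proj[of 0 1]] unfolding total_recursive_def by auto
  have "eval (Comp pH [pA]) [enc h] (enc s)" if "A h = Some (Output s)" for h s
    by (rule eval_Comp[where ys="[enc_action (Output s)]"])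
       (use pA pH[of "[enc_action (Output s)]"] that in auto)
  then show ?thesis
    unfolding computable_on_def output_of_def by fastforce
qed

theorem lemma3:
  fixes A :: algorithm and \<chi> :: "bool list \<Rightarrow> nat"
  assumes "is_algorithm A"
    and "computable_nat_on nonempty_strings \<chi>"
    and "\<forall>S \<in> nonempty_strings. reconstructs_with A S (\<chi> S)"
  shows "\<exists>C D. compressor_pair C D \<and> (\<forall>S \<in> nonempty_strings. length (C S) = \<chi> S)"
proof -
  define C where "C S = transcript_for A S (\<chi> S)" for S
  have length_C: "length (C S) = \<chi> S" and output_C: "A (C S) = Some (Output S)"
    if "S \<in> nonempty_strings" for S
    using transcript_for_spec assms(3) that unfolding C_def by blast+
  have "compressor_pair C (output_of A)"
    unfolding compressor_pair_def
  proof (intro conjI)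
    show "\<forall>S \<in> nonempty_strings. C S \<in> nonempty_strings"
      using length_C reconstructs_with_nonzero[OF assms(3)] by (fastforce simp: nonempty_strings_def)
    show "\<forall>S \<in> nonempty_strings. output_of A (C S) = S"
      by (simp add: output_of_def output_C)
    then show "inj_on C nonempty_strings"
      by (metis inj_onI)
    show "computable_on nonempty_strings C"
      unfolding C_def by (rule computable_on_transcript_for[OF assms])
    show "computable_on (C ` nonempty_strings) (output_of A)"
      by (rule computable_on_subset[OF computable_on_output_of[OF assms(1)]]) (auto dest: output_C)
  qed
  with length_C show ?thesis
    by blast
qed

end
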